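(* Let $(A,\rho)$ be an anchored vector bundle. Let $\mathrm{End}(\mathcal{C}(A))$ be the set of pairs $\Phi=(\phi,\omega)$, where $\phi:A\to A$ is an anchored vector bundle endomorphism and $\omega$ is an even $(1,2)$-tensor, i.e. an even $C^\infty(M)$-bilinear map $\omega:\underline{\mathrm{Sec}}(A)\times\underline{\mathrm{Sec}}(A)\to\underline{\mathrm{Sec}}(A)$. Each such $\Phi$ acts on linear connections by $(\Phi\nabla)_u v:=\nabla_{\phi(u)}v+\omega(u,v)$. Equip $\mathrm{End}(\mathcal{C}(A))$ with the ternary operation defined by $$([\Phi^{(1)},\Phi^{(2)},\Phi^{(3)}]\nabla)_u v:=[\Phi^{(1)}\nabla,\Phi^{(2)}\nabla,\Phi^{(3)}\nabla]_u v=\nabla_{\phi^{(1)}u}v-\nabla_{\phi^{(2)}u}v+\nabla_{\phi^{(3)}u}v+\omega^{(1)}(u,v)-\omega^{(2)}(u,v)+\omega^{(3)}(u,v)$$ (equivalently, $[\Phi^{(1)},\Phi^{(2)},\Phi^{(3)}]=(\phi^{(1)}-\phi^{(2)}+\phi^{(3)},\ \omega^{(1)}-\omega^{(2)}+\omega^{(3)})$) and the binary product $\Phi\circ\Phi':=(\phi\circ\phi',\ \omega+\omega')$ for $\Phi=(\phi,\omega)$, $\Phi'=(\phi',\omega')$. Then $\mathrm{End}(\mathcal{C}(A))$ with these operations is a truss.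
   Context: All objects are $\mathbb{Z}_2$-graded (supergeometry); the Grassmann parity of an object $x$ is denoted $\widetilde{x}\in\mathbb{Z}_2$. An anchored vector bundle is a vector bundle $\pi: A\to M$ of supermanifolds with a vector bundle homomorphism over the identity $\rho: A\to\mathsf{T}M$; it induces an even $C^\infty(M)$-module map $\rho:\underline{\mathrm{Sec}}(A)\to\mathrm{Vect}(M)$, $\rho_u:=\rho(u)$. An anchored vector bundle endomorphism is a vector bundle map $\phi:A\to A$ over the identity with $\rho\circ\phi=\rho$. A linear connection on $(A,\rho)$ is an $\mathbb{R}$-bilinear map $\nabla:\underline{\mathrm{Sec}}(A)\times\underline{\mathrm{Sec}}(A)\to\underline{\mathrm{Sec}}(A)$ with $\widetilde{\nabla_u v}=\widetilde u+\widetilde v$, $\nabla_{fu}v=f\nabla_u v$, and $\nabla_u(fv)=\rho_u(f)v+(-1)^{\widetilde u\widetilde f}f\nabla_u v$ for all $f\in C^\infty(M)$ and sections $u,v$. The set of linear connections $\mathcal{C}(A)$ carries the ternary operation $[\nabla^{(1)},\nabla^{(2)},\nabla^{(3)}]:=\nabla^{(1)}-\nabla^{(2)}+\nabla^{(3)}$. A heap is a set with a ternary operation $[a,b,c]$ that is para-associative, $[[a,b,c],d,e]=[a,[d,c,b],e]=[a,b,[c,d,e]]$, with $[a,b,b]=a=[b,b,a]$; it is abelian if $[a,b,c]=[c,b,a]$. A truss is an abelian heap together with an associative binary operation $\cdot$ that distributes over the ternary operation from both sides: $a\cdot[b,c,d]=[a\cdot b,a\cdot c,a\cdot d]$ and $[b,c,d]\cdot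 a=[b\cdot a,c\cdot a,d\cdot a]$. *)

theory Defs
  imports Main "HOL.Real_Vector_Spaces"
begin

(* Parities: False = even, True = odd; parity addition in Z_2 is (\<noteq>). *)

definition sgn_smult :: "bool \<Rightarrow> 's::ab_group_add \<Rightarrow> 's" where
  "sgn_smult b x = (if b then - x else x)"

definition heap :: "'a set \<Rightarrow> ('a \<Rightarrow> 'a \<Rightarrow> 'a \<Rightarrow> 'a) \<Rightarrow> bool" where
  "heap H t \<longleftrightarrow>
     (\<forall>a\<in>H. \<forall>b\<in>H. \<forall>c\<in>H. t a b c \<in> H) \<and>
     (\<forall>a\<in>H. \<forall>b\<in>H. \<forall>c\<in>H. \<forall>d\<in>H. \<forall>e\<in>H.
        t (t a b c) d e = t a (t d c b) e \<and> t a (t d c b) e = t a b (t c d e)) \<and>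
     (\<forall>a\<in>H. \<forall>b\<in>H. t a b b = a \<and> t b b a = a)"

definition abelian_heap :: "'a set \<Rightarrow> ('a \<Rightarrow> 'a \<Rightarrow> 'a \<Rightarrow> 'a) \<Rightarrow> bool" where
  "abelian_heap H t \<longleftrightarrow> heap H t \<and> (\<forall>a\<in>H. \<forall>b\<in>H. \<forall>c\<in>H. t a b c = t c b a)"

definition truss :: "'a set \<Rightarrow> ('a \<Rightarrow> 'a \<Rightarrow> 'a \<Rightarrow> 'a) \<Rightarrow> ('a \<Rightarrow> 'a \<Rightarrow> 'a) \<Rightarrow> bool" where
  "truss T t m \<longleftrightarrow> abelian_heap T t \<and>
     (\<forall>a\<in>T. \<forall>b\<in>T. m a b \<in> T) \<and>
     (\<forall>a\<in>T. \<forall>b\<in>T. \<forall>c\<in>T. m (m a b) c = m a (m b c)) \<and>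
     (\<forall>a\<in>T. \<forall>b\<in>T. \<forall>c\<in>T. \<forall>d\<in>T.
        m a (t b c d) = t (m a b) (m a c) (m a d) \<and>
        m (t b c d) a = t (m b a) (m c a) (m d a))"

(* Abstract algebraic model of an anchored vector bundle of supermanifolds:
   'r = C^\<infinity>(M) (a supercommutative real superalgebra, homogeneous parts hr),
   's = Sec(A) (a Z_2-graded module over 'r via sm, homogeneous parts hs),
   vector fields = derivations 'r \<Rightarrow> 'r, anchor rho : 's \<Rightarrow> ('r \<Rightarrow> 'r). *)

definition superalgebra :: "(bool \<Rightarrow> 'r::real_algebra_1 set) \<Rightarrow> bool" where
  "superalgebra hr \<longleftrightarrow>
     (\<forall>p. 0 \<in> hr p \<and> (\<forall>f\<in>hr p. \<forall>g\<in>hr p. f + g \<in> hr p \<and> - f \<in> hr p)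
         \<and> (\<forall>c f. f \<in> hr p \<longrightarrow> c *\<^sub>R f \<in> hr p)) \<and>
     1 \<in> hr False \<and>
     (\<forall>p q. \<forall>f\<in>hr p. \<forall>g\<in>hr q. f * g \<in> hr (p \<noteq> q)) \<and>
     (\<forall>f. \<exists>f0\<in>hr False. \<exists>f1\<in>hr True. f = f0 + f1) \<and>
     hr False \<inter> hr True = {0} \<and>
     (\<forall>p q. \<forall>f\<in>hr p. \<forall>g\<in>hr q. g * f = sgn_smult (p \<and> q) (f * g))"

definition supermodule ::
  "(bool \<Rightarrow> 'r::real_algebra_1 set) \<Rightarrow> ('r \<Rightarrow> 's::real_vector \<Rightarrow> 's) \<Rightarrow> (bool \<Rightarrow> 's set) \<Rightarrow> bool" where
  "supermodule hr sm hs \<longleftrightarrow>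
     (\<forall>f g u. sm (f + g) u = sm f u + sm g u) \<and>
     (\<forall>f u v. sm f (u + v) = sm f u + sm f v) \<and>
     (\<forall>f g u. sm (f * g) u = sm f (sm g u)) \<and>
     (\<forall>u. sm 1 u = u) \<and>
     (\<forall>c u. sm (of_real c) u = c *\<^sub>R u) \<and>
     (\<forall>p. 0 \<in> hs p \<and> (\<forall>u\<in>hs p. \<forall>v\<in>hs p. u + v \<in> hs p \<and> - u \<in> hs p)) \<and>
     (\<forall>p q. \<forall>f\<in>hr p. \<forall>u\<in>hs q. sm f u \<in> hs (p \<noteq> q)) \<and>
     (\<forall>u. \<exists>u0\<in>hs False. \<exists>u1\<in>hs True. u = u0 + u1) \<and>
     hs False \<inter> hs True = {0}"

definition derivation_of_parity :: "(bool \<Rightarrow> 'r::real_algebra_1 set) \<Rightarrow> bool \<Rightarrow> ('r \<Rightarrow> 'r) \<Rightarrow> bool" where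
  "derivation_of_parity hr p X \<longleftrightarrow>
     (\<forall>f g. X (f + g) = X f + X g) \<and>
     (\<forall>c f. X (c *\<^sub>R f) = c *\<^sub>R X f) \<and>
     (\<forall>q. \<forall>f\<in>hr q. X f \<in> hr (p \<noteq> q)) \<and>
     (\<forall>q. \<forall>f\<in>hr q. \<forall>g. X (f * g) = X f * g + sgn_smult (p \<and> q) (f * X g))"

definition anchored_vector_bundle ::
  "(bool \<Rightarrow> 'r::real_algebra_1 set) \<Rightarrow> ('r \<Rightarrow> 's::real_vector \<Rightarrow> 's) \<Rightarrow> (bool \<Rightarrow> 's set)
    \<Rightarrow> ('s \<Rightarrow> 'r \<Rightarrow> 'r) \<Rightarrow> bool" where
  "anchored_vector_bundle hr sm hs rho \<longleftrightarrow>
     superalgebra hr \<and> supermodule hr sm hs \<and>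
     (\<forall>u v. rho (u + v) = (\<lambda>g. rho u g + rho v g)) \<and>
     (\<forall>f u. rho (sm f u) = (\<lambda>g. f * rho u g)) \<and>
     (\<forall>p. \<forall>u\<in>hs p. derivation_of_parity hr p (rho u))"

definition anchored_endo ::
  "('r::real_algebra_1 \<Rightarrow> 's::real_vector \<Rightarrow> 's) \<Rightarrow> (bool \<Rightarrow> 's set) \<Rightarrow> ('s \<Rightarrow> 'r \<Rightarrow> 'r)
    \<Rightarrow> ('s \<Rightarrow> 's) \<Rightarrow> bool" where
  "anchored_endo sm hs rho \<phi> \<longleftrightarrow>
     (\<forall>u v. \<phi> (u + v) = \<phi> u + \<phi> v) \<and>
     (\<forall>f u. \<phi> (sm f u) = sm f (\<phi> u)) \<and>
     (\<forall>p. \<forall>u\<in>hs p. \<phi> u \<in> hs p) \<and>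
     (\<forall>u. rho (\<phi> u) = rho u)"

definition even_tensor12 ::
  "(bool \<Rightarrow> 'r::real_algebra_1 set) \<Rightarrow> ('r \<Rightarrow> 's::real_vector \<Rightarrow> 's) \<Rightarrow> (bool \<Rightarrow> 's set)
    \<Rightarrow> ('s \<Rightarrow> 's \<Rightarrow> 's) \<Rightarrow> bool" where
  "even_tensor12 hr sm hs \<omega> \<longleftrightarrow>
     (\<forall>u v w. \<omega> (u + v) w = \<omega> u w + \<omega> v w) \<and>
     (\<forall>u v w. \<omega> u (v + w) = \<omega> u v + \<omega> u w) \<and>
     (\<forall>f u v. \<omega> (sm f u) v = sm f (\<omega> u v)) \<and>
     (\<forall>p q. \<forall>u\<in>hs p. \<forall>f\<in>hr q. \<forall>v. \<omega> u (sm f v) = sgn_smult (p \<and> q) (sm f (\<omega> u v))) \<and>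
     (\<forall>p q. \<forall>u\<in>hs p. \<forall>v\<in>hs q. \<omega> u v \<in> hs (p \<noteq> q))"

definition End_C ::
  "(bool \<Rightarrow> 'r::real_algebra_1 set) \<Rightarrow> ('r \<Rightarrow> 's::real_vector \<Rightarrow> 's) \<Rightarrow> (bool \<Rightarrow> 's set)
    \<Rightarrow> ('s \<Rightarrow> 'r \<Rightarrow> 'r) \<Rightarrow> (('s \<Rightarrow> 's) \<times> ('s \<Rightarrow> 's \<Rightarrow> 's)) set" where
  "End_C hr sm hs rho = {(\<phi>, \<omega>). anchored_endo sm hs rho \<phi> \<and> even_tensor12 hr sm hs \<omega>}"

definition End_tern ::
  "('s::ab_group_add \<Rightarrow> 's) \<times> ('s \<Rightarrow> 's \<Rightarrow> 's) \<Rightarrow> ('s \<Rightarrow> 's) \<times> ('s \<Rightarrow> 's \<Rightarrow> 's)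
    \<Rightarrow> ('s \<Rightarrow> 's) \<times> ('s \<Rightarrow> 's \<Rightarrow> 's) \<Rightarrow> ('s \<Rightarrow> 's) \<times> ('s \<Rightarrow> 's \<Rightarrow> 's)" where
  "End_tern P1 P2 P3 =
     ((\<lambda>u. fst P1 u - fst P2 u + fst P3 u),
      (\<lambda>u v. snd P1 u v - snd P2 u v + snd P3 u v))"

definition End_comp ::
  "('s::ab_group_add \<Rightarrow> 's) \<times> ('s \<Rightarrow> 's \<Rightarrow> 's) \<Rightarrow> ('s \<Rightarrow> 's) \<times> ('s \<Rightarrow> 's \<Rightarrow> 's)
    \<Rightarrow> ('s \<Rightarrow> 's) \<times> ('s \<Rightarrow> 's \<Rightarrow> 's)" where
  "End_comp P Q = (fst P \<circ> fst Q, (\<lambda>u v. snd P u v + snd Q u v))"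

end

theory Submission
  imports Defs "HOL-Library.Function_Algebras" "HOL-Library.Product_Plus"
begin

text \<open>
  Pairs \<open>(\<phi>, \<omega>)\<close> live in an abelian group under pointwise addition, and there the ternary
  operation is just \<open>P - Q + R\<close>; any subset of an abelian group closed under \<open>a - b + c\<close> is an
  abelian heap. \<open>End(C(A))\<close> is such a subset: the module action, \<open>\<rho>\<close> and the tensors are
  additive, and \<open>\<phi>\<^sub>1 - \<phi>\<^sub>2 + \<phi>\<^sub>3\<close> still satisfies \<open>\<rho> \<circ> \<phi> = \<rho>\<close> because the
  coefficients sum to one (a sum of two endomorphisms would not). The product distributes over
  \<open>a - b + c\<close> on the left because endomorphisms are additive, and on the right because composition
  and addition of tensors act componentwise.
\<close>

lemma abelian_heap_affine:
  fixes H :: "'a::ab_group_add set"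
  assumes "\<And>a b c. a \<in> H \<Longrightarrow> b \<in> H \<Longrightarrow> c \<in> H \<Longrightarrow> a - b + c \<in> H"
  shows "abelian_heap H (\<lambda>a b c. a - b + c)"
  using assms unfolding abelian_heap_def heap_def by (simp add: algebra_simps)

lemma truss_affineI:
  fixes T :: "'a::ab_group_add set"
  assumes affine_closed: "\<And>a b c. a \<in> T \<Longrightarrow> b \<in> T \<Longrightarrow> c \<in> T \<Longrightarrow> a - b + c \<in> T"
    and mult_closed: "\<And>a b. a \<in> T \<Longrightarrow> b \<in> T \<Longrightarrow> m a b \<in> T"
    and mult_assoc: "\<And>a b c. a \<in> T \<Longrightarrow> b \<in> T \<Longrightarrow> c \<in> T \<Longrightarrow> m (m a b) c = m a (m b c)"
    and distrib_left: "\<And>a b c d. a \<in> T \<Longrightarrow> m a (b - c + d) = m a b - m a c + m a d"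
    and distrib_right: "\<And>a b c d. m (b - c + d) a = m b a - m c a + m d a"
  shows "truss T (\<lambda>a b c. a - b + c) m"
  unfolding truss_def
  using abelian_heap_affine[OF affine_closed] mult_closed mult_assoc distrib_left distrib_right
  by simp

lemma additive_affine:
  assumes "additive f"
  shows "f (x - y + z) = f x - f y + f z"
  by (simp add: additive.add[OF assms] additive.diff[OF assms])

lemma supermodule_additive_action:
  assumes "supermodule hr sm hs"
  shows "additive (sm f)"
  using assms by unfold_locales (simp add: supermodule_def)

lemma supermodule_homogeneous_add:
  assumes "supermodule hr sm hs" "x \<in> hs p" "y \<in> hs p"
  shows "x + y \<in> hs p"
  using assms unfolding supermodule_def by blast

lemma supermodule_homogeneous_affine:
  assumes "supermodule hr sm hs" "x \<in> hs p" "y \<in> hs p" "z \<in> hs p"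
  shows "x - y + z \<in> hs p"
proof -
  have "- y \<in> hs p"
    using assms(1,3) unfolding supermodule_def by blast
  then have "x + - y + z \<in> hs p"
    using assms by (blast intro: supermodule_homogeneous_add)
  then show ?thesis
    by simp
qed

lemma anchored_vector_bundle_additive_anchor:
  assumes "anchored_vector_bundle hr sm hs rho"
  shows "additive rho"
  using assms by unfold_locales (simp add: anchored_vector_bundle_def plus_fun_def)

lemma additive_sgn_smult: "additive (sgn_smult b)"
  by unfold_locales (simp add: sgn_smult_def)

lemma anchored_endo_additive:
  assumes "anchored_endo sm hs rho \<phi>"
  shows "additive \<phi>"
  using assms by unfold_locales (simp add: anchored_endo_def)

lemma anchored_endo_affine:
  assumes "supermodule hr sm hs" "additive rho"
    and "anchored_endo sm hs rho \<phi>\<^sub>1" "anchored_endo sm hs rho \<phi>\<^sub>2" "anchored_endo sm hs rho \<phi>\<^sub>3"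
  shows "anchored_endo sm hs rho (\<phi>\<^sub>1 - \<phi>\<^sub>2 + \<phi>\<^sub>3)"
  using assms(3-5) unfolding anchored_endo_def
  apply (intro conjI allI ballI)
     apply (simp add: algebra_simps)
    apply (simp add: additive_affine[OF supermodule_additive_action[OF assms(1)]])
   apply (simp add: supermodule_homogeneous_affine[OF assms(1)])
  apply (simp add: additive_affine[OF assms(2)])
  done

lemma anchored_endo_comp:
  assumes "anchored_endo sm hs rho \<phi>" "anchored_endo sm hs rho \<psi>"
  shows "anchored_endo sm hs rho (\<phi> \<circ> \<psi>)"
  using assms unfolding anchored_endo_def by simp

lemma even_tensor12_affine:
  assumes "supermodule hr sm hs"
    and "even_tensor12 hr sm hs \<omega>\<^sub>1" "even_tensor12 hr sm hs \<omega>\<^sub>2" "even_tensor12 hr sm hs \<omega>\<^sub>3"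
  shows "even_tensor12 hr sm hs (\<omega>\<^sub>1 - \<omega>\<^sub>2 + \<omega>\<^sub>3)"
  using assms(2-4) unfolding even_tensor12_def
  apply (intro conjI allI ballI)
      apply (simp add: algebra_simps)
     apply (simp add: algebra_simps)
    apply (simp add: additive_affine[OF supermodule_additive_action[OF assms(1)]])
   apply (simp add: additive_affine[OF supermodule_additive_action[OF assms(1)]]
      additive_affine[OF additive_sgn_smult])
  apply (simp add: supermodule_homogeneous_affine[OF assms(1)])
  done

lemma even_tensor12_add:
  assumes "supermodule hr sm hs" "even_tensor12 hr sm hs \<omega>" "even_tensor12 hr sm hs \<omega>'"
  shows "even_tensor12 hr sm hs (\<omega> + \<omega>')"
  using assms(2,3) unfolding even_tensor12_def
  by (simp add: algebra_simps additive.add[OF supermodule_additive_action[OF assms(1)]]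
      additive.add[OF additive_sgn_smult] supermodule_homogeneous_add[OF assms(1)])

lemma End_tern_eq_affine: "End_tern = (\<lambda>P Q R. P - Q + R)"
  by (simp add: End_tern_def prod_eq_iff fun_eq_iff)

lemma End_comp_eq: "End_comp P Q = (fst P \<circ> fst Q, snd P + snd Q)"
  by (simp add: End_comp_def fun_eq_iff)

lemma End_C_iff:
  "P \<in> End_C hr sm hs rho \<longleftrightarrow> anchored_endo sm hs rho (fst P) \<and> even_tensor12 hr sm hs (snd P)"
  by (cases P) (simp add: End_C_def)

lemma End_C_affine_closed:
  assumes "supermodule hr sm hs" "additive rho"
    and "P \<in> End_C hr sm hs rho" "Q \<in> End_C hr sm hs rho" "R \<in> End_C hr sm hs rho"
  shows "P - Q + R \<in> End_C hr sm hs rho"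
  using assms(3-5) anchored_endo_affine[OF assms(1,2)] even_tensor12_affine[OF assms(1)]
  by (simp add: End_C_iff)

lemma End_C_comp_closed:
  assumes "supermodule hr sm hs" "P \<in> End_C hr sm hs rho" "Q \<in> End_C hr sm hs rho"
  shows "End_comp P Q \<in> End_C hr sm hs rho"
  using assms(2,3)
  by (auto simp: End_C_iff End_comp_eq intro: anchored_endo_comp even_tensor12_add[OF assms(1)])

lemma End_comp_assoc: "End_comp (End_comp P Q) R = End_comp P (End_comp Q R)"
  by (simp add: End_comp_eq comp_assoc add.assoc)

lemma End_comp_distrib_left:
  assumes "additive (fst P)"
  shows "End_comp P (Q - R + S) = End_comp P Q - End_comp P R + End_comp P S"
  by (simp add: End_comp_eq prod_eq_iff fun_eq_iff additive_affine[OF assms])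

lemma End_comp_distrib_right: "End_comp (Q - R + S) P = End_comp Q P - End_comp R P + End_comp S P"
  by (simp add: End_comp_eq prod_eq_iff fun_eq_iff)

theorem mainTheorem6:
  fixes hr :: "bool \<Rightarrow> 'r::real_algebra_1 set"
    and sm :: "'r \<Rightarrow> 's::real_vector \<Rightarrow> 's"
    and hs :: "bool \<Rightarrow> 's set"
    and rho :: "'s \<Rightarrow> 'r \<Rightarrow> 'r"
  assumes "anchored_vector_bundle hr sm hs rho"
  shows "truss (End_C hr sm hs rho) End_tern End_comp"
proof -
  have module: "supermodule hr sm hs"
    using assms by (simp add: anchored_vector_bundle_def)
  have anchor: "additive rho"
    using assms by (rule anchored_vector_bundle_additive_anchor)
  show ?thesis
    unfolding End_tern_eq_affine
  proof (rule truss_affineI)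
    show "End_comp P (Q - R + S) = End_comp P Q - End_comp P R + End_comp P S"
      if "P \<in> End_C hr sm hs rho" for P Q R S
      using that by (auto simp: End_C_iff intro: End_comp_distrib_left anchored_endo_additive)
  qed (simp_all add: End_C_affine_closed[OF module anchor] End_C_comp_closed[OF module]
      End_comp_assoc End_comp_distrib_right)
qed

end
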